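(* Suppose UBEV-S (described in the context) is run on a contextual-bandit MDP $\mathcal M_C$, i.e. an episodic MDP whose transition probabilities satisfy $p(s'\mid s,a)=\mu(s')$ for all $s,a,s'$, for a fixed distribution $\mu$ over states. Then outside of the failure event, for every episode $k$ and timestep $t$, $$\mathrm{rng}\,\tilde V^{\pi_k}_t\le 1+\tilde O\!\left(\frac{H\sqrt S}{\sqrt{\min_{(s',t')}n_k(s',\pi_k(s',t'))}}\right).$$
   Context: Setting: a finite-horizon episodic MDP with finite state set $\mathcal S$ ($|\mathcal S|=S$), finite action set $\mathcal A$ ($|\mathcal A|=A$), horizon $H$, stationary transitions $p(s'\mid s,a)$ and mean rewards $r(s,a)\in[0,1]$ (observed rewards in $[0,1]$). Episodes $k=1,2,\dots$ each have $H$ steps. For a vector $V$, $\mathrm{rng}\,V=\max_sV(s)-\min_sV(s)$. $V^*_t$ denotes the optimal value function at timestep $t$. $\tilde O(\cdot)$ hides constants and factors polylogarithmic in quantities polynomial in $S,A,T,K,H,1/\delta$. Algorithm UBEV-S (input $\delta$): maintain, aggregated over all timesteps of all past episodes, counts $n(s,a)$, reward sums $l(s,a)$, transition counts $m(s',s,a)$ (initially $0$), and a scalar $\phi^+$ initialized to $0$ once. At the start of each episode, set $\tilde V_{H+1}\equiv0$ and for $t=H,\dots,1$ and each $s$: for each $a$, $\phi(s,a)=\sqrt{(2\ln\ln(\max\{e,n(s,a)\})+\ln(27HSA/\delta))/n(s,a)}$, $\hat r(s,a)=l(s,a)/n(s,a)$, $\hat p(s,a)=m(\cdot,s,a)/n(s,a)$,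 $Q(a)=\min\{1,\hat r+\phi\}+\min\{\max_{s'}\tilde V_{t+1}(s'),\hat p(s,a)^\top\tilde V_{t+1}+\min\{H-t,\mathrm{rng}\,\tilde V_{t+1}+\phi^+\}\phi(s,a)\}$; set $\pi_k(s,t)=\arg\max_aQ(a)$, $\tilde V_t(s)=Q(\pi_k(s,t))$, $\phi^+\leftarrow\max\{4\sqrt SH^2\phi(s,\pi_k(s,t)),\phi^+\}$. Then execute $\pi_k$ for $H$ steps and update the counts. In episode $k$: $n_k(s,a)$, $\hat r_k$, $\hat p_k$, $\phi_k$ are the quantities at the start of the episode and $\tilde V^{\pi_k}_t$ is the vector $\tilde V_t$ computed in episode $k$. Failure event: let $w_{tk}(s,a)$ be the probability, in episode $k$ under $\pi_k$, of being in $s$ at step $t$ and taking $a$. "Outside of the failure event" means that for all episodes $k$, timesteps $t$ and pairs $(s,a)$ the concentration inequalities used by the algorithm hold, in particular: $n_k(s,a)\ge\frac12\sum_{i<k}\sum_{t\in[H]}w_{ti}(s,a)-H\ln\frac{9SA}{\delta}$; $|\hat r_k(s,a)-r(s,a)|\le\phi_k(s,a)$; $|(\hat p_k(s,a)-p(\cdot\mid s,a))^\top V^*_{t+1}|\le(\mathrm{rng}\,V^*_{t+1})\phi_k(s,a)$; and $\|\hat p_k(s,a)-p(\cdot\mid s,a)\|_1\le4\sqrt S\,\phi_k(s,a)$ (so in particular $\|\hat p_k(s,a)-p(\cdot\mid s,a)\|_1=\tilde O(\sqrt{S/n_k(s,a)})$). *)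

theory Defs
  imports Complex_Main "HOL-Library.Extended_Real"
begin

(* States are {..<S}, actions are {..<A} (natural numbers), timesteps 1..H.
   Episodes are indexed k = 0,1,2,... (the paper's episode k+1). *)

definition maxV :: "nat \<Rightarrow> (nat \<Rightarrow> real) \<Rightarrow> real" where
  "maxV S V = Max (V ` {..<S})"

definition rng :: "nat \<Rightarrow> (nat \<Rightarrow> real) \<Rightarrow> real" where
  "rng S V = Max (V ` {..<S}) - Min (V ` {..<S})"

definition phi :: "real \<Rightarrow> nat \<Rightarrow> nat \<Rightarrow> nat \<Rightarrow> nat \<Rightarrow> real" where
  "phi \<delta> H S A n =
     sqrt ((2 * ln (ln (max (exp 1) (real n))) + ln (27 * real H * real S * real A / \<delta>)) / real n)"

definition phiE :: "real \<Rightarrow> nat \<Rightarrow> nat \<Rightarrow> nat \<Rightarrow> nat \<Rightarrow> ereal" where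
  "phiE \<delta> H S A n =
     (if n = 0 then \<infinity> else ereal (4 * sqrt (real S) * (real H)^2 * phi \<delta> H S A n))"

(* Q(a) at timestep t, state s, given counts n (s a), reward sums l (s a),
   transition counts m (s' s a), current phi^+ and Vn = tilde V_{t+1}. *)
definition Qval :: "real \<Rightarrow> nat \<Rightarrow> nat \<Rightarrow> nat \<Rightarrow> (nat \<Rightarrow> nat \<Rightarrow> nat) \<Rightarrow> (nat \<Rightarrow> nat \<Rightarrow> real)
     \<Rightarrow> (nat \<Rightarrow> nat \<Rightarrow> nat \<Rightarrow> nat) \<Rightarrow> ereal \<Rightarrow> (nat \<Rightarrow> real) \<Rightarrow> nat \<Rightarrow> nat \<Rightarrow> nat \<Rightarrow> real" where
  "Qval \<delta> H S A n l m \<phi>p Vn t s a =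
    (if n s a = 0 then 1 + maxV S Vn
     else (let \<phi> = phi \<delta> H S A (n s a);
               rh = l s a / real (n s a);
               ph = (\<lambda>s'. real (m s' s a) / real (n s a))
           in min 1 (rh + \<phi>)
              + min (maxV S Vn)
                    ((\<Sum>s'<S. ph s' * Vn s')
                     + real_of_ereal (min (ereal (real H - real t)) (ereal (rng S Vn) + \<phi>p)) * \<phi>)))"

type_synonym alg_state = "(nat \<Rightarrow> nat \<Rightarrow> real) \<times> (nat \<Rightarrow> nat \<Rightarrow> nat) \<times> ereal"
  (* (tilde V indexed t s, policy indexed s t, phi^+) *)

(* processing of one pair (t,s); tb k t s Q is the argmax (tie-breaking rule) *)
definition alg_step :: "real \<Rightarrow> nat \<Rightarrow> nat \<Rightarrow> nat \<Rightarrow> (nat \<Rightarrow> nat \<Rightarrow> nat) \<Rightarrow> (nat \<Rightarrow> nat \<Rightarrow> real)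
     \<Rightarrow> (nat \<Rightarrow> nat \<Rightarrow> nat \<Rightarrow> nat) \<Rightarrow> (nat \<Rightarrow> nat \<Rightarrow> (nat \<Rightarrow> real) \<Rightarrow> nat)
     \<Rightarrow> nat \<times> nat \<Rightarrow> alg_state \<Rightarrow> alg_state" where
  "alg_step \<delta> H S A n l m tb ts st =
    (case ts of (t, s) \<Rightarrow> (case st of (V, \<pi>, \<phi>p) \<Rightarrow>
      (let Q = Qval \<delta> H S A n l m \<phi>p (V (t+1)) t s;
           a = tb t s Q
       in (V(t := (V t)(s := Q a)), \<pi>(s := (\<pi> s)(t := a)), max (phiE \<delta> H S A (n s a)) \<phi>p))))"

definition alg_order :: "nat \<Rightarrow> nat list \<Rightarrow> (nat \<times> nat) list" where
  "alg_order H sl = concat (map (\<lambda>t. map (\<lambda>s. (t, s)) sl) (rev [1..<H+1]))"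

definition run_episode :: "real \<Rightarrow> nat \<Rightarrow> nat \<Rightarrow> nat \<Rightarrow> nat list \<Rightarrow> (nat \<Rightarrow> nat \<Rightarrow> nat) \<Rightarrow> (nat \<Rightarrow> nat \<Rightarrow> real)
     \<Rightarrow> (nat \<Rightarrow> nat \<Rightarrow> nat \<Rightarrow> nat) \<Rightarrow> (nat \<Rightarrow> nat \<Rightarrow> (nat \<Rightarrow> real) \<Rightarrow> nat) \<Rightarrow> ereal \<Rightarrow> alg_state" where
  "run_episode \<delta> H S A sl n l m tb \<phi>p0 =
     fold (alg_step \<delta> H S A n l m tb) (alg_order H sl) (\<lambda>t s. 0, \<lambda>s t. 0, \<phi>p0)"

(* phi^+ at the start of episode k (initialised to 0 once).
   N k, L k, M k are the counts at the start of episode k; TB k the argmax rule used in episode k. *)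
fun phip_start :: "real \<Rightarrow> nat \<Rightarrow> nat \<Rightarrow> nat \<Rightarrow> nat list \<Rightarrow> (nat \<Rightarrow> nat \<Rightarrow> nat \<Rightarrow> nat)
     \<Rightarrow> (nat \<Rightarrow> nat \<Rightarrow> nat \<Rightarrow> real) \<Rightarrow> (nat \<Rightarrow> nat \<Rightarrow> nat \<Rightarrow> nat \<Rightarrow> nat)
     \<Rightarrow> (nat \<Rightarrow> nat \<Rightarrow> nat \<Rightarrow> (nat \<Rightarrow> real) \<Rightarrow> nat) \<Rightarrow> nat \<Rightarrow> ereal" where
  "phip_start \<delta> H S A sl N L M TB 0 = 0"
| "phip_start \<delta> H S A sl N L M TB (Suc k) =
     snd (snd (run_episode \<delta> H S A sl (N k) (L k) (M k) (TB k) (phip_start \<delta> H S A sl N L M TB k)))"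

definition Vtilde where
  "Vtilde \<delta> H S A sl N L M TB k =
     fst (run_episode \<delta> H S A sl (N k) (L k) (M k) (TB k) (phip_start \<delta> H S A sl N L M TB k))"

definition policy where
  "policy \<delta> H S A sl N L M TB k =
     fst (snd (run_episode \<delta> H S A sl (N k) (L k) (M k) (TB k) (phip_start \<delta> H S A sl N L M TB k)))"

(* optimal value with j steps to go: V*_t = Vopt (H+1-t); p indexed s' s a *)
fun Vopt :: "nat \<Rightarrow> nat \<Rightarrow> (nat \<Rightarrow> nat \<Rightarrow> real) \<Rightarrow> (nat \<Rightarrow> nat \<Rightarrow> nat \<Rightarrow> real) \<Rightarrow> nat \<Rightarrow> nat \<Rightarrow> real" where
  "Vopt S A r p 0 s = 0"
| "Vopt S A r p (Suc j) s = Max ((\<lambda>a. r s a + (\<Sum>s'<S. p s' s a * Vopt S A r p j s')) ` {..<A})"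

definition Vstar where
  "Vstar H S A r p t = Vopt S A r p (H + 1 - t)"

end

theory Submission
  imports Defs
begin

(* With a = pi_k(s,t), the value tilde V_t(s) is an optimistic reward estimate in [0,1] plus
   min {max tilde V_{t+1}, hat p(s,a)^T tilde V_{t+1} + c phi(s,a)} for some 0 <= c <= H, and
   tilde V_{t+1} takes values in [0,H] by backward induction.  In a contextual bandit every
   row p(.|s,a) is the same vector mu, so for two states the transition parts differ by at most
   |(hat p_1 - mu)^T tilde V| + |(hat p_2 - mu)^T tilde V| + H phi_1
   <= 4 sqrt S H (phi_1 + phi_2) + H phi_1, and the reward parts by at most 1.  Every
   phi(s, pi_k(s,t)) is at most the confidence numerator at the largest count divided by the
   square root of the smallest count, which gives the bound with constant 9. *)

definition phi_numer :: "real \<Rightarrow> nat \<Rightarrow> nat \<Rightarrow> nat \<Rightarrow> nat \<Rightarrow> real" where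
  "phi_numer \<delta> H S A n = 2 * ln (ln (max (exp 1) (real n))) + ln (27 * real H * real S * real A / \<delta>)"

lemma phi_eq_sqrt_phi_numer: "phi \<delta> H S A n = sqrt (phi_numer \<delta> H S A n / real n)"
  unfolding phi_def phi_numer_def ..

lemma one_le_ln_max_exp_1: "1 \<le> ln (max (exp 1) (x::real))"
  using ln_le_cancel_iff[of "exp 1" "max (exp 1) x"] by (simp add: less_max_iff_disj)

lemma phi_numer_mono:
  assumes "n \<le> n'"
  shows "phi_numer \<delta> H S A n \<le> phi_numer \<delta> H S A n'"
proof -
  have "ln (max (exp 1) (real n)) \<le> ln (max (exp 1) (real n'))"
    using assms by (subst ln_le_cancel_iff) (auto simp: less_max_iff_disj)
  then show ?thesis
    using one_le_ln_max_exp_1[of "real n"] by (simp add: phi_numer_def)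
qed

lemma maxV_ge: "s < S \<Longrightarrow> V s \<le> maxV S V"
  unfolding maxV_def by (intro Max_ge) auto

lemma maxV_le_iff: "0 < S \<Longrightarrow> maxV S V \<le> B \<longleftrightarrow> (\<forall>s<S. V s \<le> B)"
  unfolding maxV_def by (subst Max_le_iff) auto

lemma rng_nonneg:
  assumes "0 < S"
  shows "0 \<le> rng S V"
proof -
  have "Min (V ` {..<S}) \<le> V 0" "V 0 \<le> Max (V ` {..<S})"
    using assms by (auto intro: Min_le Max_ge)
  then show ?thesis by (simp add: rng_def)
qed

lemma rng_attained:
  assumes "0 < S"
  obtains s1 s2 where "s1 < S" "s2 < S" "rng S V = V s1 - V s2"
proof -
  have ne: "V ` {..<S} \<noteq> {}" using assms by auto
  obtain s1 where "s1 < S" "Max (V ` {..<S}) = V s1" using Max_in[OF _ ne] by auto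
  moreover obtain s2 where "s2 < S" "Min (V ` {..<S}) = V s2" using Min_in[OF _ ne] by auto
  ultimately show thesis using that by (simp add: rng_def)
qed

lemma abs_sum_diff_mult_le:
  fixes q \<mu> V :: "'i \<Rightarrow> real"
  assumes "\<forall>i\<in>I. \<bar>V i\<bar> \<le> B"
  shows "\<bar>(\<Sum>i\<in>I. q i * V i) - (\<Sum>i\<in>I. \<mu> i * V i)\<bar> \<le> (\<Sum>i\<in>I. \<bar>q i - \<mu> i\<bar>) * B"
proof -
  have "\<bar>(\<Sum>i\<in>I. q i * V i) - (\<Sum>i\<in>I. \<mu> i * V i)\<bar> = \<bar>\<Sum>i\<in>I. (q i - \<mu> i) * V i\<bar>"
    by (simp add: left_diff_distrib sum_subtractf)
  also have "\<dots> \<le> (\<Sum>i\<in>I. \<bar>q i - \<mu> i\<bar> * B)"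
    using assms by (intro order.trans[OF sum_abs] sum_mono) (simp add: abs_mult mult_left_mono)
  finally show ?thesis by (simp add: sum_distrib_right)
qed

lemma min_diff_le:
  fixes m x y d :: real
  shows "0 \<le> d \<Longrightarrow> x \<le> y + d \<Longrightarrow> min m x - min m y \<le> d"
  by (simp add: min_def)

definition backup_at :: "real \<Rightarrow> nat \<Rightarrow> nat \<Rightarrow> nat \<Rightarrow> (nat \<Rightarrow> nat \<Rightarrow> nat) \<Rightarrow> (nat \<Rightarrow> nat \<Rightarrow> real)
     \<Rightarrow> (nat \<Rightarrow> nat \<Rightarrow> nat \<Rightarrow> nat) \<Rightarrow> (nat \<Rightarrow> nat \<Rightarrow> real) \<Rightarrow> (nat \<Rightarrow> nat \<Rightarrow> nat) \<Rightarrow> nat \<Rightarrow> nat \<Rightarrow> bool" where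
  \<comment> \<open>phi^+ grows during an episode, so only its nonnegativity is recorded\<close>
  "backup_at \<delta> H S A n l m V \<pi> t s \<longleftrightarrow> \<pi> s t < A \<and>
     (\<exists>\<phi>p\<ge>0. V t s = Qval \<delta> H S A n l m \<phi>p (V (t + 1)) t s (\<pi> s t))"

fun episode_inv :: "real \<Rightarrow> nat \<Rightarrow> nat \<Rightarrow> nat \<Rightarrow> (nat \<Rightarrow> nat \<Rightarrow> nat) \<Rightarrow> (nat \<Rightarrow> nat \<Rightarrow> real)
     \<Rightarrow> (nat \<Rightarrow> nat \<Rightarrow> nat \<Rightarrow> nat) \<Rightarrow> (nat \<times> nat) set \<Rightarrow> alg_state \<Rightarrow> bool" where
  "episode_inv \<delta> H S A n l m D (V, \<pi>, \<phi>p) \<longleftrightarrow>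
     (\<forall>(t, s)\<in>D. backup_at \<delta> H S A n l m V \<pi> t s) \<and> 0 \<le> \<phi>p \<and> V (H + 1) = (\<lambda>_. 0)"

lemma episode_inv_alg_step:
  assumes "episode_inv \<delta> H S A n l m D st" "\<forall>(t', s')\<in>D. t \<le> t' \<and> (t', s') \<noteq> (t, s)"
    "t \<le> H" "\<forall>t s Q. tb t s Q < A"
  shows "episode_inv \<delta> H S A n l m (insert (t, s) D) (alg_step \<delta> H S A n l m tb (t, s) st)"
proof -
  obtain V \<pi> \<phi>p where st: "st = (V, \<pi>, \<phi>p)" by (cases st)
  define a where "a = tb t s (Qval \<delta> H S A n l m \<phi>p (V (t + 1)) t s)"
  define V' where "V' = V(t := (V t)(s := Qval \<delta> H S A n l m \<phi>p (V (t + 1)) t s a))"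
  define \<pi>' where "\<pi>' = \<pi>(s := (\<pi> s)(t := a))"
  have step: "alg_step \<delta> H S A n l m tb (t, s) st = (V', \<pi>', max (phiE \<delta> H S A (n s a)) \<phi>p)"
    by (simp add: alg_step_def st V'_def \<pi>'_def a_def Let_def)
  have inv: "\<forall>(t, s)\<in>D. backup_at \<delta> H S A n l m V \<pi> t s" "0 \<le> \<phi>p" "V (H + 1) = (\<lambda>_. 0)"
    using assms(1) by (simp_all add: st)
  \<comment> \<open>the step only writes entry (t, s), and earlier backups only read timesteps after t\<close>
  have "backup_at \<delta> H S A n l m V' \<pi>' t' s'" if "(t', s') \<in> D" for t' s'
    using inv(1) that assms(2) by (fastforce simp: backup_at_def V'_def \<pi>'_def)
  moreover have "backup_at \<delta> H S A n l m V' \<pi>' t s"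
    using inv(2) assms(4) by (auto simp: backup_at_def V'_def \<pi>'_def a_def)
  moreover have "V' (H + 1) = (\<lambda>_. 0)"
    using inv(3) assms(3) by (simp add: V'_def)
  ultimately show ?thesis
    using inv(2) by (auto simp: step le_max_iff_disj)
qed

lemma episode_inv_fold_alg_step:
  assumes "episode_inv \<delta> H S A n l m D st" "\<forall>d\<in>D. \<forall>x\<in>set xs. fst x \<le> fst d \<and> x \<noteq> d"
    "sorted_wrt (\<lambda>x y. fst y \<le> fst x) xs" "distinct xs" "\<forall>x\<in>set xs. fst x \<le> H"
    "\<forall>t s Q. tb t s Q < A"
  shows "episode_inv \<delta> H S A n l m (D \<union> set xs) (fold (alg_step \<delta> H S A n l m tb) xs st)"
  using assms(1-5)
proof (induction xs arbitrary: D st)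
  case Nil
  then show ?case by simp
next
  case (Cons x xs)
  obtain t s where x: "x = (t, s)" by (cases x)
  have "episode_inv \<delta> H S A n l m (insert x D) (alg_step \<delta> H S A n l m tb x st)"
    using Cons.prems assms(6) unfolding x by (intro episode_inv_alg_step) auto
  then have "episode_inv \<delta> H S A n l m (insert x D \<union> set xs)
      (fold (alg_step \<delta> H S A n l m tb) xs (alg_step \<delta> H S A n l m tb x st))"
    using Cons.prems by (intro Cons.IH) auto
  then show ?case by simp
qed

lemma sorted_wrt_product_fst:
  fixes xs :: "'a::preorder list"
  shows "sorted_wrt (\<ge>) xs \<Longrightarrow> sorted_wrt (\<lambda>x y. fst y \<le> fst x) (List.product xs ys)"
  by (induction xs) (auto simp: sorted_wrt_append sorted_wrt_map)

lemma alg_order_eq_product: "alg_order H sl = List.product (rev [1..<H+1]) sl"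
  by (simp add: alg_order_def product_concat_map del: upt_Suc)

lemma episode_inv_run_episode:
  assumes "distinct sl" "0 \<le> \<phi>p0" "\<forall>t s Q. tb t s Q < A"
  shows "episode_inv \<delta> H S A n l m ({1..H} \<times> set sl) (run_episode \<delta> H S A sl n l m tb \<phi>p0)"
proof -
  have "episode_inv \<delta> H S A n l m ({} \<union> set (alg_order H sl))
      (fold (alg_step \<delta> H S A n l m tb) (alg_order H sl) (\<lambda>t s. 0, \<lambda>s t. 0, \<phi>p0))"
    using assms unfolding alg_order_eq_product
    by (intro episode_inv_fold_alg_step)
      (auto simp: distinct_product sorted_wrt_product_fst sorted_wrt_rev simp del: upt_Suc)
  then show ?thesis
    by (simp add: run_episode_def alg_order_eq_product atLeastLessThanSuc_atLeastAtMost del: upt_Suc)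
qed

lemma phip_start_nonneg:
  assumes "distinct sl" "\<forall>j t s Q. TB j t s Q < A"
  shows "0 \<le> phip_start \<delta> H S A sl N L M TB k"
proof (induction k)
  case (Suc k)
  obtain V \<pi> \<phi>p where run: "run_episode \<delta> H S A sl (N k) (L k) (M k) (TB k)
      (phip_start \<delta> H S A sl N L M TB k) = (V, \<pi>, \<phi>p)"
    by (cases "run_episode \<delta> H S A sl (N k) (L k) (M k) (TB k) (phip_start \<delta> H S A sl N L M TB k)")
  have "episode_inv \<delta> H S A (N k) (L k) (M k) ({1..H} \<times> set sl) (V, \<pi>, \<phi>p)"
    unfolding run[symmetric] using assms Suc by (intro episode_inv_run_episode) auto
  then show ?case by (simp add: run)
qed simp

lemma episode_inv_Vtilde:
  assumes "distinct sl" "\<forall>j t s Q. TB j t s Q < A"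
  shows "episode_inv \<delta> H S A (N k) (L k) (M k) ({1..H} \<times> set sl)
    (Vtilde \<delta> H S A sl N L M TB k, policy \<delta> H S A sl N L M TB k, phip_start \<delta> H S A sl N L M TB (Suc k))"
  using episode_inv_run_episode[OF assms(1) phip_start_nonneg[OF assms], of "TB k"] assms(2)
  by (simp add: Vtilde_def policy_def)

locale ubev_setting =
  fixes \<delta> :: real and H S A :: nat
  assumes S_pos: "1 \<le> S" and A_pos: "1 \<le> A" and H_pos: "1 \<le> H"
    and \<delta>_pos: "0 < \<delta>" and \<delta>_lt_1: "\<delta> < 1"
begin

lemma one_le_phi_numer: "1 \<le> phi_numer \<delta> H S A n"
proof -
  have "exp 1 \<le> (27::real)" using exp_le by linarith
  also have "27 \<le> 27 * real H * real S * real A"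
  proof -
    have "1 \<le> H * S * A" using S_pos A_pos H_pos by simp
    then show ?thesis by (simp flip: of_nat_mult)
  qed
  also have "\<dots> \<le> 27 * real H * real S * real A / \<delta>"
    using \<delta>_pos \<delta>_lt_1 by (simp add: le_divide_eq mult_left_le)
  finally have "1 \<le> ln (27 * real H * real S * real A / \<delta>)"
    by (metis exp_gt_zero ln_ge_iff order.strict_trans2)
  then show ?thesis
    using ln_ge_zero[OF one_le_ln_max_exp_1[of "real n"]] by (simp add: phi_numer_def)
qed

lemma phi_nonneg: "0 \<le> phi \<delta> H S A n"
  using one_le_phi_numer[of n] by (simp add: phi_eq_sqrt_phi_numer)

lemma phi_le_phi_numer_div_sqrt:
  assumes "0 < n0" "n0 \<le> n" "n \<le> n1"
  shows "phi \<delta> H S A n \<le> phi_numer \<delta> H S A n1 / sqrt (real n0)"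
proof -
  let ?X = "phi_numer \<delta> H S A n1"
  have "phi_numer \<delta> H S A n / real n \<le> ?X / real n0"
    using assms phi_numer_mono[OF assms(3)] one_le_phi_numer[of n] one_le_phi_numer[of n1]
    by (intro frac_le) auto
  then have "phi \<delta> H S A n \<le> sqrt ?X / sqrt (real n0)"
    by (simp add: phi_eq_sqrt_phi_numer real_sqrt_divide[symmetric])
  also have "sqrt ?X \<le> ?X"
    using one_le_phi_numer[of n1] real_sqrt_le_mono[of ?X "?X\<^sup>2"]
    by (simp add: power2_eq_square)
  finally show ?thesis by (simp add: divide_right_mono)
qed

lemma Qval_decomp:
  assumes "t \<le> H" "0 \<le> \<phi>p" "0 < n s a" "0 \<le> l s a"
  obtains \<rho> c where "0 \<le> \<rho>" "\<rho> \<le> 1" "0 \<le> c" "c \<le> real H"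
    "Qval \<delta> H S A n l m \<phi>p V t s a = \<rho> + min (maxV S V)
       ((\<Sum>s'<S. real (m s' s a) / real (n s a) * V s') + c * phi \<delta> H S A (n s a))"
proof -
  define w where "w = min (ereal (real H - real t)) (ereal (rng S V) + \<phi>p)"
  have "0 \<le> ereal (rng S V) + \<phi>p"
    using rng_nonneg[of S V] S_pos assms(2) by simp
  then have "0 \<le> w" "w \<le> ereal (real H - real t)"
    using assms(1) by (auto simp: w_def)
  then have "0 \<le> real_of_ereal w" "real_of_ereal w \<le> real H"
    by (cases w; simp)+
  moreover have "0 \<le> min 1 (l s a / real (n s a) + phi \<delta> H S A (n s a))"
    using assms(4) phi_nonneg by simp
  ultimately show thesis
    using assms(3) by (intro that[of _ "real_of_ereal w"]) (auto simp: Qval_def Let_def w_def)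
qed

lemma Qval_bounds:
  assumes "t \<le> H" "0 \<le> \<phi>p" "0 \<le> l s a" "\<forall>s'<S. 0 \<le> V s' \<and> V s' \<le> B"
  shows "0 \<le> Qval \<delta> H S A n l m \<phi>p V t s a \<and> Qval \<delta> H S A n l m \<phi>p V t s a \<le> 1 + B"
proof -
  have maxV_bounds: "0 \<le> maxV S V" "maxV S V \<le> B"
    using assms(4) S_pos maxV_ge[of 0 S V] maxV_le_iff[of S V B] by force+
  show ?thesis
  proof (cases "n s a = 0")
    case True
    then show ?thesis using maxV_bounds by (simp add: Qval_def)
  next
    case False
    then obtain \<rho> c where "0 \<le> \<rho>" "\<rho> \<le> 1" "0 \<le> c" and Q: "Qval \<delta> H S A n l m \<phi>p V t s a = \<rho> + min (maxV S V)
       ((\<Sum>s'<S. real (m s' s a) / real (n s a) * V s') + c * phi \<delta> H S A (n s a))"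
      using Qval_decomp assms(1-3) by blast
    moreover have "0 \<le> (\<Sum>s'<S. real (m s' s a) / real (n s a) * V s')"
      using assms(4) by (intro sum_nonneg) auto
    ultimately show ?thesis using maxV_bounds phi_nonneg by (simp add: Q)
  qed
qed

lemma Qval_diff_le:
  fixes \<mu> :: "nat \<Rightarrow> real"
  assumes "t \<le> H" "0 \<le> \<phi>p1" "0 \<le> \<phi>p2" "\<forall>s'<S. 0 \<le> V s' \<and> V s' \<le> B"
    "0 < n s1 a1" "0 < n s2 a2" "0 \<le> l s1 a1" "0 \<le> l s2 a2"
  shows "Qval \<delta> H S A n l m \<phi>p1 V t s1 a1 - Qval \<delta> H S A n l m \<phi>p2 V t s2 a2
    \<le> 1 + ((\<Sum>s'<S. \<bar>real (m s' s1 a1) / real (n s1 a1) - \<mu> s'\<bar>)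
           + (\<Sum>s'<S. \<bar>real (m s' s2 a2) / real (n s2 a2) - \<mu> s'\<bar>)) * B
         + real H * phi \<delta> H S A (n s1 a1)"
proof -
  define y1 where "y1 = (\<Sum>s'<S. real (m s' s1 a1) / real (n s1 a1) * V s')"
  define y2 where "y2 = (\<Sum>s'<S. real (m s' s2 a2) / real (n s2 a2) * V s')"
  define z where "z = (\<Sum>s'<S. \<mu> s' * V s')"
  define \<epsilon>1 where "\<epsilon>1 = (\<Sum>s'<S. \<bar>real (m s' s1 a1) / real (n s1 a1) - \<mu> s'\<bar>)"
  define \<epsilon>2 where "\<epsilon>2 = (\<Sum>s'<S. \<bar>real (m s' s2 a2) / real (n s2 a2) - \<mu> s'\<bar>)"
  define \<phi>1 where "\<phi>1 = phi \<delta> H S A (n s1 a1)"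
  define \<phi>2 where "\<phi>2 = phi \<delta> H S A (n s2 a2)"
  obtain \<rho>1 c1 where "\<rho>1 \<le> 1" "c1 \<le> real H"
    and Q1: "Qval \<delta> H S A n l m \<phi>p1 V t s1 a1 = \<rho>1 + min (maxV S V) (y1 + c1 * \<phi>1)"
    using Qval_decomp[of t \<phi>p1 n s1 a1 l m V] assms(1,2,5,7) unfolding y1_def \<phi>1_def by blast
  obtain \<rho>2 c2 where "0 \<le> \<rho>2" "0 \<le> c2"
    and Q2: "Qval \<delta> H S A n l m \<phi>p2 V t s2 a2 = \<rho>2 + min (maxV S V) (y2 + c2 * \<phi>2)"
    using Qval_decomp[of t \<phi>p2 n s2 a2 l m V] assms(1,3,6,8) unfolding y2_def \<phi>2_def by blast
  have V_abs: "\<forall>s'\<in>{..<S}. \<bar>V s'\<bar> \<le> B"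
    using assms(4) by auto
  have "\<bar>y1 - z\<bar> \<le> \<epsilon>1 * B" "\<bar>y2 - z\<bar> \<le> \<epsilon>2 * B"
    unfolding y1_def y2_def z_def \<epsilon>1_def \<epsilon>2_def
    by (rule abs_sum_diff_mult_le[OF V_abs])+
  moreover have "c1 * \<phi>1 \<le> real H * \<phi>1" "0 \<le> c2 * \<phi>2" "0 \<le> real H * \<phi>1"
    using \<open>c1 \<le> real H\<close> \<open>0 \<le> c2\<close> phi_nonneg
    by (auto simp: \<phi>1_def \<phi>2_def mult_right_mono)
  ultimately have "y1 + c1 * \<phi>1 \<le> (y2 + c2 * \<phi>2) + ((\<epsilon>1 + \<epsilon>2) * B + real H * \<phi>1)"
    "0 \<le> (\<epsilon>1 + \<epsilon>2) * B + real H * \<phi>1"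
    by (simp_all only: distrib_right abs_le_iff) linarith+
  then have "min (maxV S V) (y1 + c1 * \<phi>1) - min (maxV S V) (y2 + c2 * \<phi>2)
      \<le> (\<epsilon>1 + \<epsilon>2) * B + real H * \<phi>1"
    by (intro min_diff_le)
  then show ?thesis
    using \<open>\<rho>1 \<le> 1\<close> \<open>0 \<le> \<rho>2\<close> by (simp add: Q1 Q2 \<epsilon>1_def \<epsilon>2_def \<phi>1_def)
qed

lemma backup_value_bounds:
  assumes "\<forall>t\<in>{1..H}. \<forall>s<S. backup_at \<delta> H S A n l m V \<pi> t s" "V (H + 1) = (\<lambda>_. 0)"
    "\<forall>s<S. \<forall>a<A. 0 \<le> l s a" "1 \<le> t" "t \<le> H + 1"
  shows "\<forall>s<S. 0 \<le> V t s \<and> V t s \<le> real (H + 1 - t)"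
  using assms(5)
proof (induction rule: inc_induct)
  case base
  then show ?case using assms(2) by simp
next
  case (step t')
  show ?case
  proof (intro allI impI)
    fix s assume "s < S"
    then obtain \<phi>p where "\<pi> s t' < A" "0 \<le> \<phi>p"
      and V: "V t' s = Qval \<delta> H S A n l m \<phi>p (V (t' + 1)) t' s (\<pi> s t')"
      using assms(1,4) step.hyps by (force simp: backup_at_def)
    have "0 \<le> V t' s \<and> V t' s \<le> 1 + real (H + 1 - Suc t')"
      unfolding V using step.hyps step.IH \<open>s < S\<close> \<open>\<pi> s t' < A\<close> \<open>0 \<le> \<phi>p\<close> assms(3)
      by (intro Qval_bounds) auto
    then show "0 \<le> V t' s \<and> V t' s \<le> real (H + 1 - t')"
      using step.hyps by (simp add: Suc_diff_Suc)
  qed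
qed

lemma rng_backup_le:
  fixes \<mu> :: "nat \<Rightarrow> real"
  assumes "\<forall>s<S. backup_at \<delta> H S A n l m V \<pi> t s" "t \<le> H"
    "\<forall>s<S. 0 \<le> V (t + 1) s \<and> V (t + 1) s \<le> real H"
    "\<forall>s<S. \<forall>a<A. 0 \<le> l s a"
    "\<forall>s<S. 0 < n s (\<pi> s t) \<and> phi \<delta> H S A (n s (\<pi> s t)) \<le> R"
    "\<forall>s<S. (\<Sum>s'<S. \<bar>real (m s' s (\<pi> s t)) / real (n s (\<pi> s t)) - \<mu> s'\<bar>)
       \<le> 4 * sqrt (real S) * phi \<delta> H S A (n s (\<pi> s t))"
  shows "rng S (V t) \<le> 1 + 9 * sqrt (real S) * real H * R"
proof -
  obtain s1 s2 where "s1 < S" "s2 < S" and rng: "rng S (V t) = V t s1 - V t s2"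
    using rng_attained[of S] S_pos by auto
  obtain \<phi>p1 where "\<pi> s1 t < A" "0 \<le> \<phi>p1"
    and V1: "V t s1 = Qval \<delta> H S A n l m \<phi>p1 (V (t + 1)) t s1 (\<pi> s1 t)"
    using assms(1) \<open>s1 < S\<close> by (auto simp: backup_at_def)
  obtain \<phi>p2 where "\<pi> s2 t < A" "0 \<le> \<phi>p2"
    and V2: "V t s2 = Qval \<delta> H S A n l m \<phi>p2 (V (t + 1)) t s2 (\<pi> s2 t)"
    using assms(1) \<open>s2 < S\<close> by (auto simp: backup_at_def)
  define f1 where "f1 = phi \<delta> H S A (n s1 (\<pi> s1 t))"
  define f2 where "f2 = phi \<delta> H S A (n s2 (\<pi> s2 t))"
  have f: "0 \<le> f1" "f1 \<le> R" "f2 \<le> R"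
    using assms(5) \<open>s1 < S\<close> \<open>s2 < S\<close> phi_nonneg by (auto simp: f1_def f2_def)
  have "V t s1 - V t s2
      \<le> 1 + ((\<Sum>s'<S. \<bar>real (m s' s1 (\<pi> s1 t)) / real (n s1 (\<pi> s1 t)) - \<mu> s'\<bar>)
           + (\<Sum>s'<S. \<bar>real (m s' s2 (\<pi> s2 t)) / real (n s2 (\<pi> s2 t)) - \<mu> s'\<bar>)) * real H
         + real H * f1"
    unfolding V1 V2 f1_def using assms \<open>s1 < S\<close> \<open>s2 < S\<close> \<open>\<pi> s1 t < A\<close> \<open>\<pi> s2 t < A\<close>
      \<open>0 \<le> \<phi>p1\<close> \<open>0 \<le> \<phi>p2\<close>
    by (intro Qval_diff_le) auto
  also have "\<dots> \<le> 1 + (4 * sqrt (real S) * f1 + 4 * sqrt (real S) * f2) * real H + real H * f1"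
    using assms(6) \<open>s1 < S\<close> \<open>s2 < S\<close> by (intro add_mono mult_right_mono order.refl) (auto simp: f1_def f2_def)
  also have "\<dots> \<le> 1 + (4 * sqrt (real S) * R + 4 * sqrt (real S) * R) * real H + real H * R"
    using f by (intro add_mono mult_right_mono mult_left_mono order.refl) auto
  also have "\<dots> \<le> 1 + 9 * sqrt (real S) * real H * R"
  proof -
    have "real H * R * 1 \<le> real H * R * sqrt (real S)"
      using f S_pos by (intro mult_left_mono) auto
    then show ?thesis by (simp add: algebra_simps)
  qed
  finally show ?thesis by (simp add: rng)
qed

lemma rng_Vtilde_le:
  fixes \<mu> :: "nat \<Rightarrow> real"
  assumes "distinct sl" "set sl = {..<S}" "\<forall>s'<S. \<forall>s<S. \<forall>a<A. p s' s a = \<mu> s'"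
    "\<forall>j t s Q. TB j t s Q < A" "\<forall>j. \<forall>s<S. \<forall>a<A. 0 \<le> L j s a"
    "\<forall>j. \<forall>s<S. \<forall>a<A. 0 < N j s a \<longrightarrow>
       (\<Sum>s'<S. \<bar>real (M j s' s a) / real (N j s a) - p s' s a\<bar>) \<le> 4 * sqrt (real S) * phi \<delta> H S A (N j s a)"
    "t \<in> {1..H}" "\<forall>s'<S. \<forall>t'\<in>{1..H}. 0 < N k s' (policy \<delta> H S A sl N L M TB k s' t')"
  shows "rng S (Vtilde \<delta> H S A sl N L M TB k t)
    \<le> 1 + 9 * phi_numer \<delta> H S A (Max {N k s a |s a. s < S \<and> a < A}) * real H * sqrt (real S)
          / sqrt (real (Min {N k s' (policy \<delta> H S A sl N L M TB k s' t') |s' t'. s' < S \<and> t' \<in> {1..H}}))"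
proof -
  define V where "V = Vtilde \<delta> H S A sl N L M TB k"
  define \<pi> where "\<pi> = policy \<delta> H S A sl N L M TB k"
  define Nmax where "Nmax = Max {N k s a |s a. s < S \<and> a < A}"
  define counts where "counts = {N k s' (\<pi> s' t') |s' t'. s' < S \<and> t' \<in> {1..H}}"
  define nmin where "nmin = Min counts"
  have backup: "\<forall>t\<in>{1..H}. \<forall>s<S. backup_at \<delta> H S A (N k) (L k) (M k) V \<pi> t s"
    and after_horizon: "V (H + 1) = (\<lambda>_. 0)"
    using episode_inv_Vtilde[OF assms(1,4), where \<delta> = \<delta> and H = H and S = S and N = N
      and L = L and M = M and k = k] assms(2)
    by (auto simp: V_def \<pi>_def)
  have policy_lt: "\<forall>s<S. \<pi> s t < A"
    using backup assms(7) by (simp add: backup_at_def)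
  have "\<forall>s<S. 0 \<le> V (t + 1) s \<and> V (t + 1) s \<le> real (H + 1 - (t + 1))"
    using assms(5,7) backup after_horizon by (intro backup_value_bounds) auto
  then have V_next: "\<forall>s<S. 0 \<le> V (t + 1) s \<and> V (t + 1) s \<le> real H"
    by force
  have "N k 0 (\<pi> 0 1) \<in> counts"
    using S_pos H_pos unfolding counts_def by force
  then have "finite counts" "counts \<noteq> {}"
    unfolding counts_def by (auto intro: finite_image_set2)
  then have "0 < nmin" "\<forall>s<S. nmin \<le> N k s (\<pi> s t)"
    using assms(7,8) Min_in[of counts] by (auto simp: nmin_def counts_def \<pi>_def intro!: Min_le)
  moreover have "\<forall>s<S. N k s (\<pi> s t) \<le> Nmax"
  proof (intro allI impI)
    fix s assume "s < S"
    then have "N k s (\<pi> s t) \<in> {N k s a |s a. s < S \<and> a < A}"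
      using policy_lt by blast
    then show "N k s (\<pi> s t) \<le> Nmax"
      unfolding Nmax_def by (rule Max_ge[rotated]) (rule finite_image_set2; simp)
  qed
  ultimately have "\<forall>s<S. 0 < N k s (\<pi> s t)
      \<and> phi \<delta> H S A (N k s (\<pi> s t)) \<le> phi_numer \<delta> H S A Nmax / sqrt (real nmin)"
    using assms(7,8) by (auto simp: \<pi>_def intro: phi_le_phi_numer_div_sqrt)
  moreover have "\<forall>s<S. (\<Sum>s'<S. \<bar>real (M k s' s (\<pi> s t)) / real (N k s (\<pi> s t)) - \<mu> s'\<bar>)
      \<le> 4 * sqrt (real S) * phi \<delta> H S A (N k s (\<pi> s t))"
    using assms(3,6,7,8) policy_lt by (auto simp: \<pi>_def)
  ultimately have "rng S (V t) \<le> 1 + 9 * sqrt (real S) * real H * (phi_numer \<delta> H S A Nmax / sqrt (real nmin))"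
    using backup assms(5,7) V_next
    by (intro rng_backup_le[where n = "N k" and l = "L k" and m = "M k" and \<mu> = \<mu>]) auto
  then show ?thesis
    by (simp add: V_def Nmax_def nmin_def counts_def \<pi>_def mult_ac)
qed

end

theorem lemma1:
  shows "\<exists>C::real. C > 0 \<and>
    (\<forall>(S::nat) (A::nat) (H::nat) (\<delta>::real) (\<mu>::nat \<Rightarrow> real) (p::nat \<Rightarrow> nat \<Rightarrow> nat \<Rightarrow> real)
      (r::nat \<Rightarrow> nat \<Rightarrow> real) (sl::nat list)
      (N::nat \<Rightarrow> nat \<Rightarrow> nat \<Rightarrow> nat) (L::nat \<Rightarrow> nat \<Rightarrow> nat \<Rightarrow> real) (M::nat \<Rightarrow> nat \<Rightarrow> nat \<Rightarrow> nat \<Rightarrow> nat)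
      (TB::nat \<Rightarrow> nat \<Rightarrow> nat \<Rightarrow> (nat \<Rightarrow> real) \<Rightarrow> nat) (k::nat) (t::nat).
      S \<ge> 1 \<and> A \<ge> 1 \<and> H \<ge> 1 \<and> 0 < \<delta> \<and> \<delta> < 1
      \<comment> \<open>state processing order within a timestep: any enumeration of the states\<close>
      \<and> distinct sl \<and> set sl = {..<S}
      \<comment> \<open>contextual bandit: p(s'|s,a) = mu(s'), mu a distribution\<close>
      \<and> (\<forall>s'<S. 0 \<le> \<mu> s') \<and> (\<Sum>s'<S. \<mu> s') = 1
      \<and> (\<forall>s'<S. \<forall>s<S. \<forall>a<A. p s' s a = \<mu> s')
      \<and> (\<forall>s<S. \<forall>a<A. 0 \<le> r s a \<and> r s a \<le> 1)
      \<comment> \<open>the argmax rule returns a maximiser over the actions\<close>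
      \<and> (\<forall>j t' s Q. TB j t' s Q < A \<and> (\<forall>a<A. Q a \<le> Q (TB j t' s Q)))
      \<comment> \<open>basic consistency of the counts (observed rewards in [0,1])\<close>
      \<and> (\<forall>j. \<forall>s<S. \<forall>a<A. 0 \<le> L j s a \<and> L j s a \<le> real (N j s a) \<and> (\<Sum>s'<S. M j s' s a) = N j s a)
      \<comment> \<open>outside the failure event\<close>
      \<and> (\<forall>j. \<forall>s<S. \<forall>a<A. N j s a > 0 \<longrightarrow>
            \<bar>L j s a / real (N j s a) - r s a\<bar> \<le> phi \<delta> H S A (N j s a)
          \<and> (\<forall>t'\<in>{1..H}. \<bar>\<Sum>s'<S. (real (M j s' s a) / real (N j s a) - p s' s a) * Vstar H S A r p (t'+1) s'\<bar>
                 \<le> rng S (Vstar H S A r p (t'+1)) * phi \<delta> H S A (N j s a))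
          \<and> (\<Sum>s'<S. \<bar>real (M j s' s a) / real (N j s a) - p s' s a\<bar>) \<le> 4 * sqrt (real S) * phi \<delta> H S A (N j s a))
      \<and> t \<in> {1..H}
      \<comment> \<open>the minimum count is positive (otherwise the bound is infinite)\<close>
      \<and> (\<forall>s'<S. \<forall>t'\<in>{1..H}. N k s' (policy \<delta> H S A sl N L M TB k s' t') > 0)
      \<longrightarrow>
      rng S (Vtilde \<delta> H S A sl N L M TB k t)
        \<le> 1 + C * (2 * ln (ln (max (exp 1) (real (Max {N k s a |s a. s < S \<and> a < A}))))
                      + ln (27 * real H * real S * real A / \<delta>))
              * real H * sqrt (real S)
              / sqrt (real (Min {N k s' (policy \<delta> H S A sl N L M TB k s' t') |s' t'. s' < S \<and> t' \<in> {1..H}})))"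
proof (intro exI[of _ "9::real"] conjI allI impI)
  show "(0::real) < 9" by simp
qed (elim conjE, rule ubev_setting.rng_Vtilde_le[unfolded phi_numer_def], unfold_locales, (assumption | auto)+)

end
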